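(* Let $\Lambda,\delta>0$ and $T=L(\Lambda+1)\delta$ with $L\in\mathbb N$. The minimizers of $\mathcal F^T_0$ in $\mathscr A^{T,\Lambda,\delta}$ are exactly the functions $\bar u(\cdot-x_0)-\frac{\Lambda\delta}2$ with $x_0\in\mathbb R$.
   Context: The admissible class $\mathscr A^{T,\Lambda,\delta}$ is the set of continuous, $T$-periodic, piecewise affine functions $u:\mathbb R\to\mathbb R$ with $u'\in\{1,-\Lambda\}$ a.e., such that $(u')^{-1}(\{-\Lambda\})=\bigcup_{k\in\mathbb N}I^k$ for some intervals $I^k$ with $|I^k|=\delta$ for all $k$ and $\#(I^i\cap I^j)\le1$ for all $i\ne j$. The functional is $\mathcal F^T_0(u):=\frac1{2T}\int_0^T|u(x)|^2\,dx$. $\bar u$ is the $(\Lambda+1)\delta$-periodic function defined on $(-\delta,\Lambda\delta]$ by $\bar u(x)=-\Lambda x$ for $-\delta<x<0$ and $\bar u(x)=x$ for $0\le x\le\Lambda\delta$. *)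

theory Defs
  imports "HOL-Analysis.Analysis"
begin

text \<open>Piecewise affine: there is a locally finite set D of break points outside which
  u is differentiable with derivative 1 or -\<Lambda>.\<close>

definition admissible :: "real \<Rightarrow> real \<Rightarrow> real \<Rightarrow> (real \<Rightarrow> real) \<Rightarrow> bool" where
  "admissible T \<Lambda> \<delta> u \<longleftrightarrow>
     continuous_on UNIV u \<and>
     (\<forall>x. u (x + T) = u x) \<and>
     (\<exists>D :: real set.
        (\<forall>a b. finite (D \<inter> {a..b})) \<and>
        (\<forall>x. x \<notin> D \<longrightarrow>
           (u has_real_derivative 1) (at x) \<or> (u has_real_derivative (- \<Lambda>)) (at x))) \<and>
     (\<exists>I :: nat \<Rightarrow> real set.
        (\<forall>k. \<exists>a. {a<..<a + \<delta>} \<subseteq> I k \<and> I k \<subseteq> {a..a + \<delta>}) \<and>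
        (\<forall>i j. i \<noteq> j \<longrightarrow> finite (I i \<inter> I j) \<and> card (I i \<inter> I j) \<le> 1) \<and>
        (AE x in lborel. ((u has_real_derivative (- \<Lambda>)) (at x) \<longleftrightarrow> x \<in> (\<Union>k. I k))))"

definition F0 :: "real \<Rightarrow> (real \<Rightarrow> real) \<Rightarrow> real" where
  "F0 T u = (1 / (2 * T)) * integral {0..T} (\<lambda>x. (u x)\<^sup>2)"

definition minimizer :: "real \<Rightarrow> real \<Rightarrow> real \<Rightarrow> (real \<Rightarrow> real) \<Rightarrow> bool" where
  "minimizer T \<Lambda> \<delta> u \<longleftrightarrow>
     admissible T \<Lambda> \<delta> u \<and> (\<forall>v. admissible T \<Lambda> \<delta> v \<longrightarrow> F0 T u \<le> F0 T v)"

text \<open>\<open>ubar\<close>: the ((\<Lambda>+1)\<delta>)-periodic function equal to -\<Lambda>x on (-\<delta>,0) and x on [0,\<Lambda>\<delta>].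
  The reduction y lies in (-\<delta>, \<Lambda>\<delta>].\<close>

definition ubar :: "real \<Rightarrow> real \<Rightarrow> real \<Rightarrow> real" where
  "ubar \<Lambda> \<delta> x =
     (let P = (\<Lambda> + 1) * \<delta>;
          y = x - P * of_int \<lceil>(x - \<Lambda> * \<delta>) / P\<rceil>
      in if y < 0 then - \<Lambda> * y else y)"

end

theory Submission
  imports Defs
begin

text \<open>
  Let \<open>u\<close> be admissible and let \<open>a k\<close> be the left endpoints of its falling intervals.
  One period splits into teeth: starting at some \<open>a k\<close>, \<open>u\<close> falls with slope \<open>-\<Lambda>\<close> for
  time \<open>\<delta>\<close> and then rises with slope \<open>1\<close> until the next tooth starts. Periodicity forces
  the falling parts in one period to have total length \<open>L\<delta>\<close>, so there are exactly \<open>L\<close>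
  teeth, all of them complete. After subtracting \<open>(\<Lambda>\<delta>/2)\<^sup>2\<close>, the energy of a tooth is a
  cubic polynomial in its starting height \<open>h\<close> and rising length \<open>g\<close>, bounded below by
  \<open>-2/3 (\<Lambda>\<delta>/2)\<^sup>2 (\<Lambda>+1)\<delta>\<close> with equality only for \<open>h = \<Lambda>\<delta>/2\<close> and \<open>g = \<Lambda>\<delta>\<close>.
  Summing over the teeth gives \<open>\<integral>\<^sub>0\<^sup>T u\<^sup>2 \<ge> T (\<Lambda>\<delta>/2)\<^sup>2 / 3\<close>, which every translate of
  \<open>ubar - \<Lambda>\<delta>/2\<close> attains; in the equality case every tooth is a tooth of such a translate.
\<close>

section \<open>Periodic integrals, telescoping sums and separated sets\<close>

lemma periodic_plus_of_int:
  fixes f :: "real \<Rightarrow> 'a"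
  assumes "\<And>x. f (x + T) = f x"
  shows "f (x + of_int n * T) = f x"
proof -
  interpret periodic_fun_simple f T by standard (rule assms)
  show ?thesis by (rule plus_of_int)
qed

lemma integral_periodic_shift:
  fixes f :: "real \<Rightarrow> real"
  assumes per: "\<And>x. f (x + T) = f x" and cont: "continuous_on UNIV f" and "T > 0"
  shows "integral {a..a+T} f = integral {0..T} f"
proof -
  define b where "b = of_int \<lceil>a / T\<rceil> * T"
  have "a / T * T \<le> b" "b \<le> (a / T + 1) * T"
    unfolding b_def using \<open>T > 0\<close> by (intro mult_right_mono; linarith)+
  then have "a \<le> b" "b \<le> a + T" using \<open>T > 0\<close> by (simp_all add: algebra_simps)
  have int: "f integrable_on {x..y}" for x y
    using cont continuous_on_subset integrable_continuous_interval by blast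
  have shift: "f \<circ> (+) (of_int n * T) = f" for n
    using periodic_plus_of_int[of f T, OF per] by (auto simp: add.commute)
  have "integral {a..a+T} f = integral {a..b} f + integral {b..a+T} f"
    using \<open>a \<le> b\<close> \<open>b \<le> a + T\<close> int by (simp add: Henstock_Kurzweil_Integration.integral_combine)
  also have "integral {a..b} f = integral {a+T..b+T} f"
    using integral_shift_Icc_real[of a b f T] shift[of 1] by simp
  also have "integral {a+T..b+T} f + integral {b..a+T} f = integral {b..b+T} f"
    using \<open>a \<le> b\<close> \<open>b \<le> a + T\<close> int
    by (simp add: Henstock_Kurzweil_Integration.integral_combine add.commute)
  also have "integral {b..b+T} f = integral {0..T} f"
    using integral_shift_Icc_real[of 0 T f b] shift unfolding b_def by (simp add: add.commute)
  finally show ?thesis .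
qed

lemma integral_periodic_multiple:
  fixes f :: "real \<Rightarrow> real"
  assumes per: "\<And>x. f (x + P) = f x" and cont: "continuous_on UNIV f" and "P \<ge> 0"
  shows "integral {a..a + real k * P} f = real k * integral {a..a+P} f"
proof (induction k)
  case (Suc k)
  have int: "f integrable_on {x..y}" for x y
    using cont continuous_on_subset integrable_continuous_interval by blast
  have "integral {a..a + real (Suc k) * P} f
      = integral {a..a + real k * P} f + integral {a + real k * P..a + real k * P + P} f"
    using Henstock_Kurzweil_Integration.integral_combine[OF _ _ int, of a "a + real k * P"]
      \<open>P \<ge> 0\<close> by (simp add: algebra_simps)
  also have "integral {a + real k * P..a + real k * P + P} f = integral {a..a+P} f"
    using integral_shift_Icc_real[of a "a+P" f "real k * P"]
      periodic_plus_of_int[of f P, OF per, of _ "int k"]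
    by (simp add: o_def algebra_simps)
  finally show ?case using Suc by (simp add: algebra_simps)
qed simp

lemma has_integral_affine_square:
  fixes \<alpha> \<kappa> a b :: real
  assumes "a \<le> b" and "\<kappa> \<noteq> 0"
  shows "((\<lambda>x. (\<alpha> + \<kappa> * (x - a))\<^sup>2) has_integral ((\<alpha> + \<kappa> * (b - a)) ^ 3 - \<alpha> ^ 3) / (3 * \<kappa>)) {a..b}"
proof -
  define F where "F x = (\<alpha> + \<kappa> * (x - a)) ^ 3 / (3 * \<kappa>)" for x
  have "(F has_vector_derivative (\<alpha> + \<kappa> * (x - a))\<^sup>2) (at x within {a..b})" for x
    unfolding F_def has_real_derivative_iff_has_vector_derivative[symmetric]
    using \<open>\<kappa> \<noteq> 0\<close> by (auto intro!: derivative_eq_intros simp: power2_eq_square)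
  from fundamental_theorem_of_calculus[OF \<open>a \<le> b\<close> this]
  show ?thesis by (simp add: F_def diff_divide_distrib)
qed

definition next_in :: "real set \<Rightarrow> real \<Rightarrow> real \<Rightarrow> real" where
  "next_in A q x = Min ({y\<in>A. x < y} \<union> {q})"

lemma
  assumes "finite A" and "x < q"
  shows next_in_gt: "x < next_in A q x"
    and next_in_le: "next_in A q x \<le> q"
    and next_in_cases: "next_in A q x = q \<or> next_in A q x \<in> A"
    and next_in_least: "y \<in> A \<Longrightarrow> x < y \<Longrightarrow> next_in A q x \<le> y"
  using assms Min_in[of "{y\<in>A. x < y} \<union> {q}"] unfolding next_in_def by auto

lemma sum_next_in_telescope:
  fixes F :: "real \<Rightarrow> 'a::ab_group_add"
  assumes "finite A" "A \<subseteq> {p..<q}" "p \<in> A"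
  shows "(\<Sum>x\<in>A. F (next_in A q x) - F x) = F q - F p"
  using assms
proof (induction "card A" arbitrary: A q rule: less_induct)
  case less
  define m where "m = Max A"
  have "m \<in> A" unfolding m_def using less.prems by (intro Max_in) auto
  have m_max: "\<And>x. x \<in> A \<Longrightarrow> x \<le> m" using less.prems by (simp add: m_def)
  show ?case
  proof (cases "m = p")
    case True
    then have "A = {p}" using less.prems m_max by fastforce
    moreover have no_later: "{y. y = p \<and> p < y} = {}" by auto
    ultimately show ?thesis by (simp add: next_in_def no_later)
  next
    case False
    define A' where "A' = A - {m}"
    have IH: "(\<Sum>x\<in>A'. F (next_in A' m x) - F x) = F m - F p"
    proof (rule less.hyps)
      show "card A' < card A" using \<open>m \<in> A\<close> less.prems unfolding A'_def by (intro card_Diff1_less)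
      show "A' \<subseteq> {p..<m}" using m_max less.prems unfolding A'_def by fastforce
    qed (use False less.prems in \<open>auto simp: A'_def\<close>)
    have "m < q" using \<open>m \<in> A\<close> less.prems by auto
    have "next_in A q x = next_in A' m x" if "x \<in> A'" for x
    proof -
      have "{y\<in>A. x < y} \<union> {q} = insert q ({y\<in>A'. x < y} \<union> {m})"
        using that m_max \<open>m \<in> A\<close> unfolding A'_def by force
      moreover have "Min ({y\<in>A'. x < y} \<union> {m}) \<le> m"
        using less.prems unfolding A'_def by (intro Min_le) auto
      ultimately show ?thesis
        using less.prems \<open>m < q\<close> unfolding next_in_def A'_def by (simp add: min_def)
    qed
    then have "(\<Sum>x\<in>A'. F (next_in A q x) - F x) = F m - F p"
      using IH by (simp cong: sum.cong)
    moreover have "next_in A q m = q"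
      using m_max unfolding next_in_def by (metis (lifting) Collect_empty_eq Min_singleton
          leD sup_bot_left)
    moreover have "(\<Sum>x\<in>A. F (next_in A q x) - F x)
        = (F (next_in A q m) - F m) + (\<Sum>x\<in>A'. F (next_in A q x) - F x)"
      using less.prems(1) \<open>m \<in> A\<close> unfolding A'_def by (rule sum.remove)
    ultimately show ?thesis by simp
  qed
qed

lemma finite_if_separated:
  fixes A :: "real set"
  assumes "A \<subseteq> {a..b}" and "\<delta> > 0" and sep: "\<And>x y. x \<in> A \<Longrightarrow> y \<in> A \<Longrightarrow> x \<noteq> y \<Longrightarrow> \<delta> \<le> \<bar>x - y\<bar>"
  shows "finite A"
proof -
  have "inj_on (\<lambda>x. \<lfloor>x / \<delta>\<rfloor>) A"
  proof (rule inj_onI, rule ccontr)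
    fix x y assume xy: "x \<in> A" "y \<in> A" "\<lfloor>x / \<delta>\<rfloor> = \<lfloor>y / \<delta>\<rfloor>" "x \<noteq> y"
    then have "\<bar>x / \<delta> - y / \<delta>\<bar> < 1" by linarith
    then have "\<bar>x - y\<bar> < \<delta>" using \<open>\<delta> > 0\<close> by (simp add: diff_divide_distrib[symmetric])
    then show False using sep[OF xy(1,2,4)] by simp
  qed
  moreover have "(\<lambda>x. \<lfloor>x / \<delta>\<rfloor>) ` A \<subseteq> {\<lfloor>a / \<delta>\<rfloor>..\<lfloor>b / \<delta>\<rfloor>}"
    using assms(1,2) by (force intro!: floor_mono divide_right_mono)
  ultimately show ?thesis by (meson finite_atLeastAtMost_int finite_imageD finite_subset)
qed

lemma finite_arith_progression_Icc:
  fixes c P :: real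
  assumes "P > 0"
  shows "finite (range (\<lambda>m::int. c + of_int m * P) \<inter> {a..b})"
proof (rule finite_subset)
  show "range (\<lambda>m::int. c + of_int m * P) \<inter> {a..b}
      \<subseteq> (\<lambda>m::int. c + of_int m * P) ` {\<lceil>(a - c) / P\<rceil>..\<lfloor>(b - c) / P\<rfloor>}"
    using assms by (auto simp: ceiling_le_iff le_floor_iff field_simps)
qed simp

section \<open>The sawtooth profile \<open>ubar\<close>\<close>

lemma if_neg_eq_max:
  fixes \<Lambda> y :: real
  assumes "\<Lambda> > 0"
  shows "(if y < 0 then - \<Lambda> * y else y) = max y (- \<Lambda> * y)"
proof (cases "y < 0")
  case True
  then show ?thesis using mult_pos_neg[OF assms, of y] by (simp add: max_absorb2)
next
  case False
  moreover have "0 \<le> \<Lambda> * y" using False assms by simp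
  ultimately show ?thesis by (simp add: max_absorb1)
qed

lemma ubar_reduced:
  assumes "\<Lambda> > 0" "\<delta> > 0" and y: "- \<delta> < y" "y \<le> \<Lambda> * \<delta>"
  shows "ubar \<Lambda> \<delta> (y + of_int m * ((\<Lambda> + 1) * \<delta>)) = max y (- \<Lambda> * y)"
proof -
  define P where "P = (\<Lambda> + 1) * \<delta>"
  have "P > 0" unfolding P_def using assms by (auto intro!: mult_pos_pos)
  have "\<lceil>(y + of_int m * P - \<Lambda> * \<delta>) / P\<rceil> = m"
  proof (rule ceiling_unique)
    have "(y + of_int m * P - \<Lambda> * \<delta>) / P = of_int m + (y - \<Lambda> * \<delta>) / P"
      using \<open>P > 0\<close> by (simp add: field_simps)
    moreover have "- 1 < (y - \<Lambda> * \<delta>) / P" "(y - \<Lambda> * \<delta>) / P \<le> 0"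
      using y \<open>P > 0\<close> by (simp_all add: field_simps P_def)
    ultimately show "of_int m - 1 < (y + of_int m * P - \<Lambda> * \<delta>) / P"
      "(y + of_int m * P - \<Lambda> * \<delta>) / P \<le> of_int m" by linarith+
  qed
  then have "ubar \<Lambda> \<delta> (y + of_int m * P) = (if y < 0 then - \<Lambda> * y else y)"
    unfolding ubar_def Let_def P_def[symmetric] by simp
  then show ?thesis using if_neg_eq_max[OF \<open>\<Lambda> > 0\<close>] by (simp add: P_def)
qed

lemma ubar_decompose:
  fixes \<Lambda> \<delta> z :: real
  assumes "\<Lambda> > 0" "\<delta> > 0"
  obtains y m where "- \<delta> < y" "y \<le> \<Lambda> * \<delta>" "z = y + of_int m * ((\<Lambda> + 1) * \<delta>)"
proof -
  define P where "P = (\<Lambda> + 1) * \<delta>"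
  have "P > 0" unfolding P_def using assms by (auto intro!: mult_pos_pos)
  define m where "m = \<lceil>(z - \<Lambda> * \<delta>) / P\<rceil>"
  have "(z - \<Lambda> * \<delta>) / P \<le> m" "m - 1 < (z - \<Lambda> * \<delta>) / P" unfolding m_def by linarith+
  then have "z - \<Lambda> * \<delta> \<le> m * P" "(m - 1) * P < z - \<Lambda> * \<delta>"
    using \<open>P > 0\<close> by (simp_all add: pos_divide_le_eq pos_less_divide_eq)
  then show ?thesis using that[of "z - m * P" m] by (simp add: P_def algebra_simps)
qed

lemma ubar_periodic:
  assumes "\<Lambda> > 0" "\<delta> > 0"
  shows "ubar \<Lambda> \<delta> (z + (\<Lambda> + 1) * \<delta>) = ubar \<Lambda> \<delta> z"
proof -
  obtain y m where y: "- \<delta> < y" "y \<le> \<Lambda> * \<delta>" and z: "z = y + of_int m * ((\<Lambda> + 1) * \<delta>)"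
    using ubar_decompose[OF assms] .
  have shifted: "z + (\<Lambda> + 1) * \<delta> = y + of_int (m + 1) * ((\<Lambda> + 1) * \<delta>)"
    unfolding z by (simp add: algebra_simps)
  show ?thesis unfolding shifted unfolding z by (simp only: ubar_reduced[OF assms y])
qed

lemma ubar_on_period:
  assumes "\<Lambda> > 0" "\<delta> > 0" and y: "- \<delta> \<le> y" "y \<le> \<Lambda> * \<delta>"
  shows "ubar \<Lambda> \<delta> (y + of_int m * ((\<Lambda> + 1) * \<delta>)) = max y (- \<Lambda> * y)"
proof (cases "y = - \<delta>")
  case True
  have pos: "\<Lambda> * \<delta> > 0" using assms by simp
  then have "- \<delta> < \<Lambda> * \<delta>" using assms by linarith
  have "y + of_int m * ((\<Lambda> + 1) * \<delta>) = \<Lambda> * \<delta> + of_int (m - 1) * ((\<Lambda> + 1) * \<delta>)"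
    using True by (simp add: algebra_simps)
  also have "ubar \<Lambda> \<delta> \<dots> = max (\<Lambda> * \<delta>) (- \<Lambda> * (\<Lambda> * \<delta>))"
    using ubar_reduced[OF assms(1,2) \<open>- \<delta> < \<Lambda> * \<delta>\<close> order_refl] .
  also have "\<dots> = \<Lambda> * \<delta>"
    using pos mult_pos_pos[OF assms(1) pos] by (simp add: max_absorb1)
  also have "\<dots> = max y (- \<Lambda> * y)"
    using True \<open>- \<delta> < \<Lambda> * \<delta>\<close> by (simp add: max_absorb2)
  finally show ?thesis .
qed (use ubar_reduced[OF assms(1,2)] y in auto)

lemma isCont_ubar:
  assumes "\<Lambda> > 0" "\<delta> > 0"
  shows "isCont (ubar \<Lambda> \<delta>) z"
proof -
  define P where "P = (\<Lambda> + 1) * \<delta>"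
  have "P > 0" "\<Lambda> * \<delta> > 0" unfolding P_def using assms by (auto intro!: mult_pos_pos)
  define piece where "piece m = {of_int m * P - \<delta> .. of_int m * P + \<Lambda> * \<delta>}" for m :: int
  have cont_piece: "continuous_on (piece m) (ubar \<Lambda> \<delta>)" for m
  proof (rule continuous_on_eq)
    show "continuous_on (piece m) (\<lambda>x. max (x - of_int m * P) (- \<Lambda> * (x - of_int m * P)))"
      by (intro continuous_intros)
    show "max (x - of_int m * P) (- \<Lambda> * (x - of_int m * P)) = ubar \<Lambda> \<delta> x"
      if "x \<in> piece m" for x
      using ubar_on_period[OF assms, of "x - of_int m * P" m] that
      unfolding piece_def P_def by simp
  qed
  define m where "m = \<lfloor>z / P\<rfloor>"
  have "of_int m \<le> z / P" "z / P < of_int m + 1" unfolding m_def by linarith+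
  then have "of_int m * P \<le> z" "z < of_int (m + 1) * P"
    using \<open>P > 0\<close> by (simp_all add: pos_le_divide_eq pos_divide_less_eq distrib_right)
  then have z: "z \<in> {of_int m * P - \<delta> <..< of_int (m + 1) * P + \<Lambda> * \<delta>}"
    using \<open>\<delta> > 0\<close> \<open>\<Lambda> * \<delta> > 0\<close> by simp
  have touch: "of_int (m + 1) * P - \<delta> = of_int m * P + \<Lambda> * \<delta>" by (simp add: P_def algebra_simps)
  have "continuous_on (piece m \<union> piece (m + 1)) (ubar \<Lambda> \<delta>)"
    by (intro continuous_on_closed_Un cont_piece) (simp_all add: piece_def)
  moreover have "piece m \<union> piece (m + 1) = {of_int m * P - \<delta> .. of_int (m + 1) * P + \<Lambda> * \<delta>}"
    unfolding piece_def touch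
    by (rule ivl_disj_un_two_touch(4)) (use \<open>\<delta> > 0\<close> \<open>\<Lambda> * \<delta> > 0\<close> \<open>P > 0\<close> in auto)
  ultimately have "continuous_on {of_int m * P - \<delta> <..< of_int (m + 1) * P + \<Lambda> * \<delta>} (ubar \<Lambda> \<delta>)"
    by (auto elim!: continuous_on_subset)
  then show ?thesis using z by (simp add: continuous_on_eq_continuous_at)
qed

lemma ubar_has_real_derivative:
  assumes "\<Lambda> > 0" "\<delta> > 0" and y: "- \<delta> < y" "y < \<Lambda> * \<delta>" "y \<noteq> 0"
  shows "(ubar \<Lambda> \<delta> has_real_derivative (if y < 0 then - \<Lambda> else 1))
           (at (y + of_int m * ((\<Lambda> + 1) * \<delta>)))"
proof -
  define c where "c = of_int m * ((\<Lambda> + 1) * \<delta>)"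
  have "\<Lambda> * \<delta> > 0" using assms by simp
  have ubar_near: "ubar \<Lambda> \<delta> x = max (x - c) (- \<Lambda> * (x - c))" if "x \<in> {c - \<delta>..c + \<Lambda> * \<delta>}" for x
    using ubar_on_period[OF assms(1,2), of "x - c" m] that unfolding c_def by simp
  show ?thesis
  proof (cases "y < 0")
    case True
    have "((\<lambda>x. - \<Lambda> * (x - c)) has_real_derivative - \<Lambda>) (at (y + c))"
      by (auto intro!: derivative_eq_intros)
    then have "(ubar \<Lambda> \<delta> has_real_derivative - \<Lambda>) (at (y + c))"
    proof (rule has_field_derivative_transform_within_open[of _ _ _ "{c - \<delta> <..< c}"])
      show "- \<Lambda> * (x - c) = ubar \<Lambda> \<delta> x" if "x \<in> {c - \<delta> <..< c}" for x
        using that ubar_near[of x] \<open>\<Lambda> > 0\<close> \<open>\<Lambda> * \<delta> > 0\<close> if_neg_eq_max[of \<Lambda> "x - c"] by simp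
    qed (use True y in auto)
    then show ?thesis using True by (simp add: c_def)
  next
    case False
    have "((\<lambda>x. x - c) has_real_derivative 1) (at (y + c))"
      by (auto intro!: derivative_eq_intros)
    then have "(ubar \<Lambda> \<delta> has_real_derivative 1) (at (y + c))"
    proof (rule has_field_derivative_transform_within_open[of _ _ _ "{c <..< c + \<Lambda> * \<delta>}"])
      show "x - c = ubar \<Lambda> \<delta> x" if "x \<in> {c <..< c + \<Lambda> * \<delta>}" for x
        using that ubar_near[of x] \<open>\<Lambda> > 0\<close> \<open>\<delta> > 0\<close> if_neg_eq_max[of \<Lambda> "x - c"] by simp
    qed (use False y in auto)
    then show ?thesis using False by (simp add: c_def)
  qed
qed

lemma ubar_shift_has_real_derivative:
  assumes "\<Lambda> > 0" "\<delta> > 0" and t: "t - x0 = y + of_int m * ((\<Lambda> + 1) * \<delta>)"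
    and y: "- \<delta> < y" "y < \<Lambda> * \<delta>" "y \<noteq> 0"
  shows "((\<lambda>x. ubar \<Lambda> \<delta> (x - x0) - \<Lambda> * \<delta> / 2) has_real_derivative (if y < 0 then - \<Lambda> else 1)) (at t)"
proof -
  have "(ubar \<Lambda> \<delta> has_real_derivative (if y < 0 then - \<Lambda> else 1)) (at (t - x0))"
    unfolding t by (rule ubar_has_real_derivative[OF assms(1,2) y])
  then have "((\<lambda>x. ubar \<Lambda> \<delta> (x - x0)) has_real_derivative (if y < 0 then - \<Lambda> else 1) * 1) (at t)"
    by (intro DERIV_chain') (auto intro!: derivative_eq_intros)
  from DERIV_diff[OF this DERIV_const[of "\<Lambda> * \<delta> / 2"]] show ?thesis by simp
qed

lemma disjoint_Icc_int_translates:
  fixes P \<delta> c :: real and p q :: int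
  assumes "0 \<le> \<delta>" "\<delta> < P" "p \<noteq> q"
  shows "{c + of_int p * P - \<delta> .. c + of_int p * P} \<inter> {c + of_int q * P - \<delta> .. c + of_int q * P} = {}"
proof -
  have "of_int (p + 1) \<le> (of_int q :: real) \<or> of_int (q + 1) \<le> (of_int p :: real)"
    using \<open>p \<noteq> q\<close> by (simp only: of_int_le_iff) linarith
  then have "of_int (p + 1) * P \<le> of_int q * P \<or> of_int (q + 1) * P \<le> of_int p * P"
    using assms by (meson less_imp_le mult_right_mono order_le_less_trans)
  then have "of_int p * P + P \<le> of_int q * P \<or> of_int q * P + P \<le> of_int p * P"
    by (simp only: of_int_add of_int_1 distrib_right mult_1)
  with \<open>\<delta> < P\<close> show ?thesis by auto
qed

lemma ubar_falling_part_iff: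
  fixes \<Lambda> \<delta> t x0 y :: real
  assumes "\<Lambda> > 0" "\<delta> > 0" and t: "t - x0 = y + of_int m * ((\<Lambda> + 1) * \<delta>)"
    and y: "- \<delta> < y" "y < \<Lambda> * \<delta>"
  shows "(\<exists>p::int. t \<in> {x0 + of_int p * ((\<Lambda> + 1) * \<delta>) - \<delta> .. x0 + of_int p * ((\<Lambda> + 1) * \<delta>)})
    \<longleftrightarrow> y \<le> 0"
proof
  define P where "P = (\<Lambda> + 1) * \<delta>"
  have "P > 0" unfolding P_def using assms by (auto intro!: mult_pos_pos)
  assume "\<exists>p::int. t \<in> {x0 + of_int p * ((\<Lambda> + 1) * \<delta>) - \<delta> .. x0 + of_int p * ((\<Lambda> + 1) * \<delta>)}"
  then obtain p :: int where p: "of_int p * P - \<delta> \<le> y + of_int m * P" "y + of_int m * P \<le> of_int p * P"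
    using t unfolding P_def by (auto simp: algebra_simps)
  show "y \<le> 0"
  proof (rule ccontr)
    assume "\<not> y \<le> 0"
    then have "of_int m * P < of_int p * P" using p by linarith
    then have "of_int (m + 1) * P \<le> of_int p * P" using \<open>P > 0\<close> by simp
    then show False using p y \<open>\<not> y \<le> 0\<close> unfolding P_def by (simp add: algebra_simps)
  qed
next
  assume "y \<le> 0"
  then have "t \<in> {x0 + of_int m * ((\<Lambda> + 1) * \<delta>) - \<delta> .. x0 + of_int m * ((\<Lambda> + 1) * \<delta>)}"
    using t y by simp
  then show "\<exists>p::int. t \<in> {x0 + of_int p * ((\<Lambda> + 1) * \<delta>) - \<delta> .. x0 + of_int p * ((\<Lambda> + 1) * \<delta>)}" ..
qed

lemma ubar_shift_derivative_off_breaks: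
  fixes \<Lambda> \<delta> x0 t :: real
  defines "P \<equiv> (\<Lambda> + 1) * \<delta>" and "u \<equiv> \<lambda>x. ubar \<Lambda> \<delta> (x - x0) - \<Lambda> * \<delta> / 2"
  assumes "\<Lambda> > 0" "\<delta> > 0"
    and t: "t \<notin> range (\<lambda>m::int. x0 + of_int m * P) \<union> range (\<lambda>m::int. x0 + \<Lambda> * \<delta> + of_int m * P)"
  shows "(u has_real_derivative 1) (at t) \<or> (u has_real_derivative (- \<Lambda>)) (at t)"
    and "(u has_real_derivative (- \<Lambda>)) (at t) \<longleftrightarrow> (\<exists>p::int. t \<in> {x0 + of_int p * P - \<delta> .. x0 + of_int p * P})"
proof -
  obtain y m where y: "- \<delta> < y" "y \<le> \<Lambda> * \<delta>" and tm: "t - x0 = y + of_int m * P"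
    using ubar_decompose[OF assms(3,4), of "t - x0"] unfolding P_def by blast
  have "y \<noteq> 0" "y \<noteq> \<Lambda> * \<delta>" using t tm by (auto simp: algebra_simps)
  with y have y': "- \<delta> < y" "y < \<Lambda> * \<delta>" "y \<noteq> 0" by simp_all
  have deriv: "(u has_real_derivative (if y < 0 then - \<Lambda> else 1)) (at t)"
    using ubar_shift_has_real_derivative[OF assms(3,4) tm[unfolded P_def] y'] unfolding u_def .
  then show "(u has_real_derivative 1) (at t) \<or> (u has_real_derivative (- \<Lambda>)) (at t)"
    by (cases "y < 0") simp_all
  have "(u has_real_derivative (- \<Lambda>)) (at t) \<longleftrightarrow> y < 0"
  proof (cases "y < 0")
    case False
    then have rising: "(u has_real_derivative 1) (at t)" using deriv by simp
    show ?thesis using False \<open>\<Lambda> > 0\<close> DERIV_unique[OF rising, of "- \<Lambda>"] by auto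
  qed (use deriv in simp)
  also have "\<dots> \<longleftrightarrow> y \<le> 0" using \<open>y \<noteq> 0\<close> by linarith
  also have "\<dots> \<longleftrightarrow> (\<exists>p::int. t \<in> {x0 + of_int p * P - \<delta> .. x0 + of_int p * P})"
    using ubar_falling_part_iff[OF assms(3,4) tm[unfolded P_def] y'(1,2)] unfolding P_def by simp
  finally show "(u has_real_derivative (- \<Lambda>)) (at t) \<longleftrightarrow> (\<exists>p::int. t \<in> {x0 + of_int p * P - \<delta> .. x0 + of_int p * P})" .
qed

lemma admissible_ubar_shift:
  assumes "\<Lambda> > 0" "\<delta> > 0" and T: "T = real L * (\<Lambda> + 1) * \<delta>"
  shows "admissible T \<Lambda> \<delta> (\<lambda>x. ubar \<Lambda> \<delta> (x - x0) - \<Lambda> * \<delta> / 2)"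
    (is "admissible T \<Lambda> \<delta> ?u")
proof -
  define P where "P = (\<Lambda> + 1) * \<delta>"
  have "P > 0" unfolding P_def using assms by (auto intro!: mult_pos_pos)
  have "\<Lambda> * \<delta> > 0" using assms by simp
  then have "\<delta> < P" unfolding P_def by (simp add: algebra_simps)
  define D where "D = range (\<lambda>m::int. x0 + of_int m * P) \<union> range (\<lambda>m::int. x0 + \<Lambda> * \<delta> + of_int m * P)"
  text \<open>The falling parts of \<open>?u\<close>, enumerated by \<open>\<nat>\<close> through the bijection \<open>int_decode\<close>.\<close>
  define I where "I k = {x0 + of_int (int_decode k) * P - \<delta> .. x0 + of_int (int_decode k) * P}" for k
  note off_D = ubar_shift_derivative_off_breaks[OF assms(1,2), of _ x0, folded P_def]
  have "continuous_on UNIV ?u"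
    by (intro continuous_at_imp_continuous_on ballI continuous_intros
          continuous_at_compose[OF _ isCont_ubar[OF assms(1,2)], unfolded o_def])
  moreover have "?u (x + T) = ?u x" for x
    using periodic_plus_of_int[of "ubar \<Lambda> \<delta>" P, OF ubar_periodic[OF assms(1,2), folded P_def],
        of "x - x0" "int L"]
    unfolding T P_def by (simp add: algebra_simps)
  moreover have "finite (D \<inter> {a..b})" for a b
    using finite_arith_progression_Icc[OF \<open>P > 0\<close>, of x0 a b]
      finite_arith_progression_Icc[OF \<open>P > 0\<close>, of "x0 + \<Lambda> * \<delta>" a b]
    unfolding D_def by (simp add: Int_Un_distrib2)
  moreover have "(?u has_real_derivative 1) (at t) \<or> (?u has_real_derivative (- \<Lambda>)) (at t)"
    if "t \<notin> D" for t
    by (rule off_D(1)) (use that in \<open>simp add: D_def\<close>)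
  moreover have "\<exists>a. {a<..<a + \<delta>} \<subseteq> I k \<and> I k \<subseteq> {a..a + \<delta>}" for k
    by (rule exI[of _ "x0 + of_int (int_decode k) * P - \<delta>"]) (auto simp: I_def)
  moreover have "I i \<inter> I j = {}" if "i \<noteq> j" for i j
  proof -
    have "int_decode i \<noteq> int_decode j" using that inj_int_decode unfolding inj_def by blast
    show ?thesis unfolding I_def
      by (rule disjoint_Icc_int_translates) (use \<open>\<delta> > 0\<close> \<open>\<delta> < P\<close> \<open>int_decode i \<noteq> int_decode j\<close> in auto)
  qed
  then have "\<forall>i j. i \<noteq> j \<longrightarrow> finite (I i \<inter> I j) \<and> card (I i \<inter> I j) \<le> 1" by simp
  moreover have "AE x in lborel. ((?u has_real_derivative (- \<Lambda>)) (at x) \<longleftrightarrow> x \<in> (\<Union>k. I k))"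
  proof (rule AE_I')
    show "D \<in> null_sets lborel" unfolding D_def by (intro countable_imp_null_set_lborel) auto
    have "(?u has_real_derivative - \<Lambda>) (at t) \<longleftrightarrow> t \<in> (\<Union>k. I k)" if "t \<notin> D" for t
    proof -
      have "t \<in> (\<Union>k. I k) \<longleftrightarrow> (\<exists>p::int. t \<in> {x0 + of_int p * P - \<delta> .. x0 + of_int p * P})"
      proof
        assume "\<exists>p::int. t \<in> {x0 + of_int p * P - \<delta> .. x0 + of_int p * P}"
        then obtain p :: int where "t \<in> {x0 + of_int p * P - \<delta> .. x0 + of_int p * P}" ..
        moreover obtain k where "p = int_decode k" using surjD[OF surj_int_decode] by blast
        ultimately show "t \<in> (\<Union>k. I k)" unfolding I_def by blast
      qed (auto simp: I_def)
      moreover have "t \<notin> range (\<lambda>m::int. x0 + of_int m * P) \<union> range (\<lambda>m::int. x0 + \<Lambda> * \<delta> + of_int m * P)"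
        using that unfolding D_def .
      ultimately show ?thesis using off_D(2) by simp
    qed
    then show "{x \<in> space lborel. \<not> ((?u has_real_derivative - \<Lambda>) (at x) \<longleftrightarrow> x \<in> (\<Union>k. I k))} \<subseteq> D"
      by blast
  qed
  ultimately show ?thesis unfolding admissible_def by blast
qed

section \<open>Energy of a single tooth\<close>

lemma cubic_increment_ge:
  fixes c \<beta> \<gamma> :: real
  assumes "c > 0" and "\<beta> \<le> \<gamma>"
  shows "0 \<le> (\<gamma>^3/3 - c\<^sup>2*\<gamma>) - (\<beta>^3/3 - c\<^sup>2*\<beta>) + 4*c^3/3"
proof -
  have diff: "(\<gamma>^3/3 - c\<^sup>2*\<gamma>) - (\<beta>^3/3 - c\<^sup>2*\<beta>) = (\<gamma> - \<beta>) * ((\<gamma>*\<gamma> + \<gamma>*\<beta> + \<beta>*\<beta>) - 3*(c*c)) / 3"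
    by (simp add: algebra_simps power2_eq_square power3_eq_cube)
  have nonneg_if: ?thesis if "0 \<le> (\<gamma>*\<gamma> + \<gamma>*\<beta> + \<beta>*\<beta>) - 3*(c*c)"
  proof -
    have "0 \<le> (\<gamma> - \<beta>) * ((\<gamma>*\<gamma> + \<gamma>*\<beta> + \<beta>*\<beta>) - 3*(c*c))" using that assms by simp
    moreover have "0 \<le> c ^ 3" using assms by simp
    ultimately show ?thesis using diff by linarith
  qed
  consider "\<gamma> < - 2 * c" | "2 * c < \<beta>" | "- 2 * c \<le> \<gamma>" "\<beta> \<le> 2 * c" by linarith
  then show ?thesis
  proof cases
    case 1
    have "c * c \<le> (- \<gamma>) * (- \<gamma>)" "c * c \<le> (- \<beta>) * (- \<beta>)" "c * c \<le> (- \<gamma>) * (- \<beta>)"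
      by (rule mult_mono; use 1 assms in linarith)+
    then show ?thesis by (intro nonneg_if) linarith
  next
    case 2
    have "c * c \<le> \<gamma> * \<gamma>" "c * c \<le> \<beta> * \<beta>" "c * c \<le> \<gamma> * \<beta>"
      by (rule mult_mono; use 2 assms in linarith)+
    then show ?thesis by (intro nonneg_if) linarith
  next
    case 3
    text \<open>\<open>y\<^sup>3/3 - c\<^sup>2y\<close> drops by exactly \<open>4c\<^sup>3/3\<close> from its local maximum at \<open>-c\<close>
      to its local minimum at \<open>c\<close>.\<close>
    have eq: "(\<gamma>^3/3 - c\<^sup>2*\<gamma>) - (\<beta>^3/3 - c\<^sup>2*\<beta>) + 4*c^3/3
        = ((\<gamma> - c)\<^sup>2 * (\<gamma> + 2*c) + (\<beta> + c)\<^sup>2 * (2*c - \<beta>)) / 3"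
      by (simp add: algebra_simps power2_eq_square power3_eq_cube)
    have "0 \<le> (\<gamma> - c)\<^sup>2 * (\<gamma> + 2*c)" "0 \<le> (\<beta> + c)\<^sup>2 * (2*c - \<beta>)" using 3 by simp_all
    then show ?thesis unfolding eq by simp
  qed
qed

definition tooth_energy :: "real \<Rightarrow> real \<Rightarrow> real \<Rightarrow> real \<Rightarrow> real" where
  "tooth_energy \<Lambda> \<delta> h g =
     (h ^ 3 - (h - \<Lambda> * \<delta>) ^ 3) / (3 * \<Lambda>) + ((h - \<Lambda> * \<delta> + g) ^ 3 - (h - \<Lambda> * \<delta>) ^ 3) / 3
     - (\<Lambda> * \<delta> / 2)\<^sup>2 * (\<delta> + g)"

lemma tooth_energy_excess:
  assumes "\<Lambda> > 0" and c: "c = \<Lambda> * \<delta> / 2"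
  shows "tooth_energy \<Lambda> \<delta> h g + 2/3 * c\<^sup>2 * ((\<Lambda> + 1) * \<delta>)
    = 2 * c * (h - c)\<^sup>2 / \<Lambda>
      + (((h - 2*c + g)^3/3 - c\<^sup>2*(h - 2*c + g)) - ((h - 2*c)^3/3 - c\<^sup>2*(h - 2*c)) + 4*c^3/3)"
proof -
  have \<delta>: "\<delta> = 2 * c / \<Lambda>" using assms by (auto simp: field_simps)
  show ?thesis
    unfolding tooth_energy_def \<delta> using \<open>\<Lambda> > 0\<close>
    by (simp add: field_simps power2_eq_square power3_eq_cube)
qed

lemma tooth_energy_ge:
  assumes "\<Lambda> > 0" "\<delta> > 0" "g \<ge> 0"
  shows "- 2/3 * (\<Lambda> * \<delta> / 2)\<^sup>2 * ((\<Lambda> + 1) * \<delta>) \<le> tooth_energy \<Lambda> \<delta> h g"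
proof -
  define c where "c = \<Lambda> * \<delta> / 2"
  have "c > 0" using assms unfolding c_def by simp
  have "0 \<le> 2 * c * (h - c)\<^sup>2 / \<Lambda>" using \<open>c > 0\<close> \<open>\<Lambda> > 0\<close> by simp
  moreover have "0 \<le> ((h - 2*c + g)^3/3 - c\<^sup>2*(h - 2*c + g)) - ((h - 2*c)^3/3 - c\<^sup>2*(h - 2*c)) + 4*c^3/3"
    by (rule cubic_increment_ge) (use \<open>c > 0\<close> \<open>g \<ge> 0\<close> in auto)
  ultimately show ?thesis
    using tooth_energy_excess[OF \<open>\<Lambda> > 0\<close> c_def, of h g] unfolding c_def by linarith
qed

lemma tooth_energy_eq_min_iff:
  assumes "\<Lambda> > 0" "\<delta> > 0" "g \<ge> 0"
  shows "tooth_energy \<Lambda> \<delta> h g = - 2/3 * (\<Lambda> * \<delta> / 2)\<^sup>2 * ((\<Lambda> + 1) * \<delta>)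
    \<longleftrightarrow> h = \<Lambda> * \<delta> / 2 \<and> g = \<Lambda> * \<delta>"
proof -
  define c where "c = \<Lambda> * \<delta> / 2"
  have "c > 0" using assms unfolding c_def by simp
  have "tooth_energy \<Lambda> \<delta> h g + 2/3 * c\<^sup>2 * ((\<Lambda> + 1) * \<delta>) = 0
      \<longleftrightarrow> h = c \<and> g = 2 * c"
  proof
    assume min: "tooth_energy \<Lambda> \<delta> h g + 2/3 * c\<^sup>2 * ((\<Lambda> + 1) * \<delta>) = 0"
    have first: "0 \<le> 2 * c * (h - c)\<^sup>2 / \<Lambda>" using \<open>c > 0\<close> \<open>\<Lambda> > 0\<close> by simp
    have second: "0 \<le> ((h - 2*c + g)^3/3 - c\<^sup>2*(h - 2*c + g)) - ((h - 2*c)^3/3 - c\<^sup>2*(h - 2*c)) + 4*c^3/3"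
      by (rule cubic_increment_ge) (use \<open>c > 0\<close> \<open>g \<ge> 0\<close> in auto)
    have "2 * c * (h - c)\<^sup>2 / \<Lambda> = 0"
      using min first second tooth_energy_excess[OF \<open>\<Lambda> > 0\<close> c_def, of h g] by linarith
    then have "h = c" using \<open>c > 0\<close> \<open>\<Lambda> > 0\<close> by simp
    have "((h - 2*c + g)^3/3 - c\<^sup>2*(h - 2*c + g)) - ((h - 2*c)^3/3 - c\<^sup>2*(h - 2*c)) + 4*c^3/3 = 0"
      using min first second tooth_energy_excess[OF \<open>\<Lambda> > 0\<close> c_def, of h g] by linarith
    moreover have "((h - 2*c + g)^3/3 - c\<^sup>2*(h - 2*c + g)) - ((h - 2*c)^3/3 - c\<^sup>2*(h - 2*c)) + 4*c^3/3
        = (g - 2*c)\<^sup>2 * (g + c) / 3"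
      unfolding \<open>h = c\<close> by (simp add: field_simps power2_eq_square power3_eq_cube)
    ultimately have "(g - 2*c)\<^sup>2 * (g + c) / 3 = 0" by simp
    then have "g = 2 * c" using \<open>c > 0\<close> \<open>g \<ge> 0\<close> by (simp add: add_pos_nonneg)
    with \<open>h = c\<close> show "h = c \<and> g = 2 * c" ..
  next
    assume "h = c \<and> g = 2 * c"
    then show "tooth_energy \<Lambda> \<delta> h g + 2/3 * c\<^sup>2 * ((\<Lambda> + 1) * \<delta>) = 0"
      using tooth_energy_excess[OF \<open>\<Lambda> > 0\<close> c_def, of h g]
      by (simp add: algebra_simps power2_eq_square power3_eq_cube)
  qed
  then show ?thesis unfolding c_def by (auto simp: algebra_simps)
qed

lemma has_integral_tooth:
  fixes u :: "real \<Rightarrow> real"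
  assumes "\<Lambda> \<noteq> 0" "\<delta> \<ge> 0" "g \<ge> 0"
    and fall: "\<And>s. 0 \<le> s \<Longrightarrow> s \<le> \<delta> \<Longrightarrow> u (x + s) = u x - \<Lambda> * s"
    and rise: "\<And>s. 0 \<le> s \<Longrightarrow> s \<le> g \<Longrightarrow> u (x + \<delta> + s) = u x - \<Lambda> * \<delta> + s"
  shows "((\<lambda>t. (u t)\<^sup>2 - (\<Lambda> * \<delta> / 2)\<^sup>2) has_integral tooth_energy \<Lambda> \<delta> (u x) g) {x..x + \<delta> + g}"
proof -
  define h where "h = u x"
  have "((\<lambda>t. (h + (- \<Lambda>) * (t - x))\<^sup>2) has_integral ((h + (- \<Lambda>) * (x + \<delta> - x)) ^ 3 - h ^ 3) / (3 * (- \<Lambda>))) {x..x + \<delta>}"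
    by (rule has_integral_affine_square) (use assms in auto)
  moreover have "((h + (- \<Lambda>) * (x + \<delta> - x)) ^ 3 - h ^ 3) / (3 * (- \<Lambda>)) = (h ^ 3 - (h - \<Lambda> * \<delta>) ^ 3) / (3 * \<Lambda>)"
    by (simp add: divide_simps)
  moreover have "u t = h + (- \<Lambda>) * (t - x)" if "t \<in> {x..x + \<delta>}" for t
    using fall[of "t - x"] that unfolding h_def by simp
  then have "((\<lambda>t. (u t)\<^sup>2) has_integral i) {x..x + \<delta>} \<longleftrightarrow> ((\<lambda>t. (h + (- \<Lambda>) * (t - x))\<^sup>2) has_integral i) {x..x + \<delta>}" for i
    by (intro has_integral_cong) simp
  ultimately have falling: "((\<lambda>t. (u t)\<^sup>2) has_integral (h ^ 3 - (h - \<Lambda> * \<delta>) ^ 3) / (3 * \<Lambda>)) {x..x + \<delta>}"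
    by simp
  have "((\<lambda>t. (h - \<Lambda> * \<delta> + 1 * (t - (x + \<delta>)))\<^sup>2) has_integral
      ((h - \<Lambda> * \<delta> + 1 * (x + \<delta> + g - (x + \<delta>))) ^ 3 - (h - \<Lambda> * \<delta>) ^ 3) / (3 * 1)) {x + \<delta>..x + \<delta> + g}"
    by (rule has_integral_affine_square) (use assms in auto)
  moreover have "u t = h - \<Lambda> * \<delta> + 1 * (t - (x + \<delta>))" if "t \<in> {x + \<delta>..x + \<delta> + g}" for t
    using rise[of "t - (x + \<delta>)"] that unfolding h_def by simp
  then have "((\<lambda>t. (u t)\<^sup>2) has_integral i) {x + \<delta>..x + \<delta> + g} \<longleftrightarrow>
      ((\<lambda>t. (h - \<Lambda> * \<delta> + 1 * (t - (x + \<delta>)))\<^sup>2) has_integral i) {x + \<delta>..x + \<delta> + g}" for i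
    by (intro has_integral_cong) simp
  ultimately have rising: "((\<lambda>t. (u t)\<^sup>2) has_integral ((h - \<Lambda> * \<delta> + g) ^ 3 - (h - \<Lambda> * \<delta>) ^ 3) / 3) {x + \<delta>..x + \<delta> + g}"
    by simp
  have "((\<lambda>t. (u t)\<^sup>2) has_integral (h ^ 3 - (h - \<Lambda> * \<delta>) ^ 3) / (3 * \<Lambda>)
      + ((h - \<Lambda> * \<delta> + g) ^ 3 - (h - \<Lambda> * \<delta>) ^ 3) / 3) {x..x + \<delta> + g}"
    using has_integral_combine[OF _ _ falling rising] assms by simp
  from has_integral_diff[OF this has_integral_const_real[of "(\<Lambda> * \<delta> / 2)\<^sup>2" x "x + \<delta> + g"]]
  show ?thesis unfolding tooth_energy_def h_def using assms by (simp add: algebra_simps)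
qed

lemma has_integral_ubar_shift_period:
  assumes "\<Lambda> > 0" "\<delta> > 0"
  shows "((\<lambda>x. (ubar \<Lambda> \<delta> (x - x0) - \<Lambda> * \<delta> / 2)\<^sup>2 - (\<Lambda> * \<delta> / 2)\<^sup>2) has_integral
      - 2/3 * (\<Lambda> * \<delta> / 2)\<^sup>2 * ((\<Lambda> + 1) * \<delta>)) {x0 - \<delta>..x0 - \<delta> + (\<Lambda> + 1) * \<delta>}"
proof -
  define c where "c = \<Lambda> * \<delta> / 2"
  define u where "u x = ubar \<Lambda> \<delta> (x - x0) - c" for x
  have on_period: "u (x0 + y) = max y (- \<Lambda> * y) - c" if "- \<delta> \<le> y" "y \<le> \<Lambda> * \<delta>" for y
    using ubar_on_period[OF assms that, of 0] unfolding u_def by simp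
  have "\<Lambda> * \<delta> > 0" using assms by simp
  then have "- \<delta> \<le> \<Lambda> * \<delta>" using assms by linarith
  then have "u (x0 - \<delta>) = c" using on_period[of "- \<delta>"] assms unfolding c_def by (simp add: max_def)
  have tooth: "((\<lambda>x. (u x)\<^sup>2 - c\<^sup>2) has_integral tooth_energy \<Lambda> \<delta> (u (x0 - \<delta>)) (\<Lambda> * \<delta>))
      {x0 - \<delta>..x0 - \<delta> + \<delta> + \<Lambda> * \<delta>}"
    unfolding c_def
  proof (rule has_integral_tooth)
    show "u (x0 - \<delta> + s) = u (x0 - \<delta>) - \<Lambda> * s" if "0 \<le> s" "s \<le> \<delta>" for s
    proof -
      have "0 \<le> - \<Lambda> * (s - \<delta>)" using that \<open>\<Lambda> > 0\<close> by (simp add: mult_nonneg_nonpos)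
      then have "max (s - \<delta>) (- \<Lambda> * (s - \<delta>)) = - \<Lambda> * (s - \<delta>)" using that by (simp add: max_absorb2)
      moreover have "u (x0 + (s - \<delta>)) = max (s - \<delta>) (- \<Lambda> * (s - \<delta>)) - c"
        using that \<open>\<Lambda> * \<delta> > 0\<close> by (intro on_period) auto
      ultimately show ?thesis using \<open>u (x0 - \<delta>) = c\<close> unfolding c_def by (simp add: algebra_simps)
    qed
    show "u (x0 - \<delta> + \<delta> + s) = u (x0 - \<delta>) - \<Lambda> * \<delta> + s" if "0 \<le> s" "s \<le> \<Lambda> * \<delta>" for s
      using on_period[of s] that \<open>u (x0 - \<delta>) = c\<close> assms if_neg_eq_max[of \<Lambda> s]
      unfolding c_def by simp
  qed (use assms in auto)
  have endpoint: "x0 - \<delta> + \<delta> + \<Lambda> * \<delta> = x0 - \<delta> + (\<Lambda> + 1) * \<delta>" by (simp add: algebra_simps)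
  have energy: "tooth_energy \<Lambda> \<delta> c (\<Lambda> * \<delta>) = - 2/3 * c\<^sup>2 * ((\<Lambda> + 1) * \<delta>)"
    using tooth_energy_eq_min_iff[OF assms] \<open>\<Lambda> * \<delta> > 0\<close> unfolding c_def by simp
  show ?thesis
    using tooth unfolding \<open>u (x0 - \<delta>) = c\<close> energy endpoint unfolding u_def c_def .
qed

lemma integral_ubar_shift_square:
  assumes "\<Lambda> > 0" "\<delta> > 0" and T: "T = real L * (\<Lambda> + 1) * \<delta>"
  shows "integral {0..T} (\<lambda>x. (ubar \<Lambda> \<delta> (x - x0) - \<Lambda> * \<delta> / 2)\<^sup>2) = T * (\<Lambda> * \<delta> / 2)\<^sup>2 / 3"
proof (cases "L = 0")
  case False
  define c where "c = \<Lambda> * \<delta> / 2"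
  define P where "P = (\<Lambda> + 1) * \<delta>"
  define f where "f x = (ubar \<Lambda> \<delta> (x - x0) - c)\<^sup>2 - c\<^sup>2" for x
  have "P > 0" unfolding P_def using assms by (auto intro!: mult_pos_pos)
  have "T > 0" using False \<open>P > 0\<close> unfolding T P_def by (simp add: mult.assoc)
  have cont_f: "continuous_on UNIV f"
    unfolding f_def by (intro continuous_at_imp_continuous_on ballI continuous_intros
          continuous_at_compose[OF _ isCont_ubar[OF assms(1,2)], unfolded o_def])
  have per_f: "f (x + P) = f x" for x
    using ubar_periodic[OF assms(1,2), of "x - x0"] unfolding f_def P_def by (simp add: algebra_simps)
  have "integral {0..T} f = integral {x0 - \<delta>..x0 - \<delta> + real L * P} f"
    using integral_periodic_shift[OF _ cont_f \<open>T > 0\<close>] periodic_plus_of_int[of f P, OF per_f, of _ "int L"]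
    unfolding T P_def by (simp add: mult.assoc)
  also have "\<dots> = real L * (- 2/3 * c\<^sup>2 * P)"
    using integral_periodic_multiple[OF per_f cont_f, of "x0 - \<delta>" L] \<open>P > 0\<close>
      integral_unique[OF has_integral_ubar_shift_period[OF assms(1,2), of x0]]
    unfolding f_def c_def P_def by simp
  finally have "integral {0..T} f = - 2/3 * c\<^sup>2 * T" unfolding T P_def by (simp add: algebra_simps)
  moreover have "integral {0..T} (\<lambda>x. f x + c\<^sup>2) = integral {0..T} f + integral {0..T} (\<lambda>x. c\<^sup>2)"
    using cont_f continuous_on_subset integrable_continuous_interval by (intro integral_add) blast+
  ultimately show ?thesis using \<open>T > 0\<close> unfolding f_def c_def by (simp add: algebra_simps)
qed (use T in simp)

section \<open>Teeth of an admissible function\<close>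

lemma admissible_slope_integral:
  fixes u :: "real \<Rightarrow> real"
  assumes "admissible T \<Lambda> \<delta> u"
  obtains I :: "nat \<Rightarrow> real set" where
    "\<And>k. \<exists>a. {a<..<a + \<delta>} \<subseteq> I k \<and> I k \<subseteq> {a..a + \<delta>}"
    "\<And>i j. i \<noteq> j \<Longrightarrow> finite (I i \<inter> I j)"
    "\<And>x y. x \<le> y \<Longrightarrow> ((\<lambda>t. if t \<in> (\<Union>k. I k) then - \<Lambda> else 1) has_integral (u y - u x)) {x..y}"
proof -
  from assms obtain D :: "real set" and I :: "nat \<Rightarrow> real set"
    where cont: "continuous_on UNIV u"
    and D: "\<And>a b. finite (D \<inter> {a..b})"
    and deriv: "\<And>x. x \<notin> D \<Longrightarrow> (u has_real_derivative 1) (at x) \<or> (u has_real_derivative (- \<Lambda>)) (at x)"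
    and I: "\<And>k. \<exists>a. {a<..<a + \<delta>} \<subseteq> I k \<and> I k \<subseteq> {a..a + \<delta>}"
      "\<And>i j. i \<noteq> j \<Longrightarrow> finite (I i \<inter> I j)"
    and ae: "AE x in lborel. ((u has_real_derivative (- \<Lambda>)) (at x) \<longleftrightarrow> x \<in> (\<Union>k. I k))"
    unfolding admissible_def by blast
  define slope where "slope t = (if (u has_real_derivative (- \<Lambda>)) (at t) then - \<Lambda> else (1::real))" for t
  from ae obtain N where N: "{x \<in> space lborel. \<not> ((u has_real_derivative (- \<Lambda>)) (at x) \<longleftrightarrow> x \<in> (\<Union>k. I k))} \<subseteq> N"
    "emeasure lborel N = 0" "N \<in> sets lborel"
    by (elim AE_E) auto
  have "negligible N"
    unfolding negligible_iff_null_sets using N by (intro null_sets_completionI) (simp add: null_setsI)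
  have "((\<lambda>t. if t \<in> (\<Union>k. I k) then - \<Lambda> else 1) has_integral (u y - u x)) {x..y}" if "x \<le> y" for x y
  proof (rule has_integral_spike[OF \<open>negligible N\<close>])
    show "(slope has_integral (u y - u x)) {x..y}"
    proof (rule fundamental_theorem_of_calculus_interior_strong[OF D \<open>x \<le> y\<close>])
      show "continuous_on {x..y} u" using cont continuous_on_subset by blast
      show "(u has_vector_derivative slope t) (at t)" if "t \<in> {x<..<y} - D \<inter> {x..y}" for t
      proof (cases "(u has_real_derivative (- \<Lambda>)) (at t)")
        case False
        moreover have "t \<notin> D" using that by auto
        ultimately have "(u has_real_derivative 1) (at t)" using deriv[of t] by blast
        with False show ?thesis by (simp add: slope_def has_real_derivative_iff_has_vector_derivative)
      qed (simp add: slope_def has_real_derivative_iff_has_vector_derivative)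
    qed
    show "(if t \<in> (\<Union>k. I k) then - \<Lambda> else 1) = slope t" if "t \<in> {x..y} - N" for t
      using N(1) that unfolding slope_def by auto
  qed
  with I show thesis by (rule that)
qed

lemma admissible_obtain_teeth:
  fixes u :: "real \<Rightarrow> real"
  assumes "\<delta> > 0" "admissible T \<Lambda> \<delta> u"
  obtains a :: "nat \<Rightarrow> real" where
    "\<And>i j. i \<noteq> j \<Longrightarrow> \<delta> \<le> \<bar>a i - a j\<bar>"
    "\<And>k s. 0 \<le> s \<Longrightarrow> s \<le> \<delta> \<Longrightarrow> u (a k + s) = u (a k) - \<Lambda> * s"
    "\<And>x y. x \<le> y \<Longrightarrow> \<forall>k. a k + \<delta> \<le> x \<or> y \<le> a k \<Longrightarrow> u y = u x + (y - x)"
proof -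
  obtain I :: "nat \<Rightarrow> real set" where I: "\<And>k. \<exists>a. {a<..<a + \<delta>} \<subseteq> I k \<and> I k \<subseteq> {a..a + \<delta>}"
    and overlap: "\<And>i j. i \<noteq> j \<Longrightarrow> finite (I i \<inter> I j)"
    and ftc: "\<And>x y. x \<le> y \<Longrightarrow> ((\<lambda>t. if t \<in> (\<Union>k. I k) then - \<Lambda> else 1) has_integral (u y - u x)) {x..y}"
    using admissible_slope_integral[OF assms(2)] by blast
  from I obtain a where a: "\<And>k. {a k<..<a k + \<delta>} \<subseteq> I k \<and> I k \<subseteq> {a k..a k + \<delta>}"
    by (metis choice)
  have affine: "u y - u x = \<kappa> * (y - x)"
    if "x \<le> y" "\<And>t. t \<in> {x<..<y} \<Longrightarrow> (if t \<in> (\<Union>k. I k) then - \<Lambda> else 1) = \<kappa>" for x y \<kappa>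
  proof -
    have "((\<lambda>t. \<kappa>) has_integral \<kappa> * (y - x)) {x..y}"
      using has_integral_const_real[of \<kappa> x y] \<open>x \<le> y\<close> by (simp add: mult.commute)
    then have "((\<lambda>t. if t \<in> (\<Union>k. I k) then - \<Lambda> else 1) has_integral \<kappa> * (y - x)) {x..y}"
      by (rule has_integral_spike_finite[of "{x, y}", rotated 2]) (use that(2) in auto)
    with ftc[OF \<open>x \<le> y\<close>] show ?thesis by (rule has_integral_unique)
  qed
  have "\<delta> \<le> \<bar>a i - a j\<bar>" if "i \<noteq> j" for i j
  proof (rule ccontr)
    assume "\<not> \<delta> \<le> \<bar>a i - a j\<bar>"
    then have "infinite {max (a i) (a j) <..< min (a i + \<delta>) (a j + \<delta>)}" using \<open>\<delta> > 0\<close> by auto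
    moreover have "{max (a i) (a j) <..< min (a i + \<delta>) (a j + \<delta>)} \<subseteq> I i \<inter> I j"
      using a by fastforce
    ultimately show False using overlap[OF that] finite_subset by blast
  qed
  moreover have "u (a k + s) = u (a k) - \<Lambda> * s" if "0 \<le> s" "s \<le> \<delta>" for k s
    using affine[of "a k" "a k + s" "- \<Lambda>"] that a by force
  moreover have "u y = u x + (y - x)" if "x \<le> y" "\<forall>k. a k + \<delta> \<le> x \<or> y \<le> a k" for x y
  proof -
    have "t \<notin> I k" if "t \<in> {x<..<y}" for t k
    proof
      assume "t \<in> I k"
      then have "a k \<le> t" "t \<le> a k + \<delta>" using a[of k] by auto
      moreover have "a k + \<delta> \<le> x \<or> y \<le> a k" using \<open>\<forall>k. a k + \<delta> \<le> x \<or> y \<le> a k\<close> by blast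
      ultimately show False using that by auto
    qed
    then show ?thesis using affine[of x y 1] that by simp
  qed
  ultimately show thesis by (rule that)
qed

section \<open>Energy of a periodic sawtooth\<close>

locale sawtooth =
  fixes \<Lambda> \<delta> T :: real and L :: nat and u :: "real \<Rightarrow> real" and a :: "nat \<Rightarrow> real"
  assumes \<Lambda>_pos: "\<Lambda> > 0" and \<delta>_pos: "\<delta> > 0" and L_pos: "L \<ge> 1"
    and T_eq: "T = real L * (\<Lambda> + 1) * \<delta>"
    and continuous: "continuous_on UNIV u"
    and periodic: "\<And>x. u (x + T) = u x"
    and separated: "\<And>i j. i \<noteq> j \<Longrightarrow> \<delta> \<le> \<bar>a i - a j\<bar>"
    and falling: "\<And>k s. 0 \<le> s \<Longrightarrow> s \<le> \<delta> \<Longrightarrow> u (a k + s) = u (a k) - \<Lambda> * s"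
    and rising: "\<And>x y. x \<le> y \<Longrightarrow> \<forall>k. a k + \<delta> \<le> x \<or> y \<le> a k \<Longrightarrow> u y = u x + (y - x)"
begin

definition P :: real where "P = (\<Lambda> + 1) * \<delta>"

definition starts :: "real set" where "starts = {x. \<exists>k. x = a k \<and> a 0 \<le> x \<and> x < a 0 + T}"

definition nxt :: "real \<Rightarrow> real" where "nxt = next_in starts (a 0 + T)"

lemma P_pos: "P > 0" and T_pos: "T > 0" and T_eq_P: "T = real L * P"
  using \<Lambda>_pos \<delta>_pos L_pos unfolding T_eq P_def by (auto intro!: mult_pos_pos)

lemma starts_subset: "starts \<subseteq> {a 0..<a 0 + T}" and start_0: "a 0 \<in> starts"
  using T_pos unfolding starts_def by auto

lemma starts_separated:
  assumes "x \<in> starts" "y \<in> starts" "x \<noteq> y"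
  shows "\<delta> \<le> \<bar>x - y\<bar>"
proof -
  obtain i j where "x = a i" "y = a j" using assms(1,2) unfolding starts_def by blast
  with assms(3) show ?thesis using separated[of i j] by blast
qed

lemma finite_starts: "finite starts"
proof (rule finite_if_separated[OF _ \<delta>_pos starts_separated])
  show "starts \<subseteq> {a 0..a 0 + T}" using starts_subset by auto
qed

lemma
  assumes "x \<in> starts"
  shows nxt_gt: "x < nxt x" and nxt_le: "nxt x \<le> a 0 + T"
    and nxt_cases: "nxt x = a 0 + T \<or> nxt x \<in> starts"
    and nxt_least: "y \<in> starts \<Longrightarrow> x < y \<Longrightarrow> nxt x \<le> y"
proof -
  have "x < a 0 + T" using assms starts_subset by auto
  note facts = next_in_gt[OF finite_starts this] next_in_le[OF finite_starts this]
    next_in_cases[OF finite_starts this] next_in_least[OF finite_starts this]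
  show "x < nxt x" "nxt x \<le> a 0 + T" "nxt x = a 0 + T \<or> nxt x \<in> starts"
    "y \<in> starts \<Longrightarrow> x < y \<Longrightarrow> nxt x \<le> y"
    using facts unfolding nxt_def by blast+
qed

lemma no_tooth_between:
  assumes "x \<in> starts" "x + \<delta> \<le> s" "t \<le> nxt x"
  shows "\<forall>k. a k + \<delta> \<le> s \<or> t \<le> a k"
proof
  fix k
  obtain j where j: "x = a j" using assms(1) unfolding starts_def by auto
  show "a k + \<delta> \<le> s \<or> t \<le> a k"
  proof (cases "a k \<le> x")
    case True
    then show ?thesis using separated[of k j] j assms by (cases "k = j") auto
  next
    case False
    show ?thesis
    proof (cases "a k < a 0 + T")
      case True
      then have "a k \<in> starts" using False starts_subset assms(1) unfolding starts_def by force
      then show ?thesis using nxt_least[OF assms(1)] False assms by force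
    next
      case False
      then show ?thesis using nxt_le[OF assms(1)] assms by auto
    qed
  qed
qed

lemma rising_after_tooth:
  assumes "x \<in> starts" "x + \<delta> \<le> t" "t \<le> nxt x"
  shows "u t = u x - \<Lambda> * \<delta> + (t - (x + \<delta>))"
proof -
  obtain k where "x = a k" using assms(1) unfolding starts_def by auto
  then have "u (x + \<delta>) = u x - \<Lambda> * \<delta>" using falling[of \<delta> k] \<delta>_pos by simp
  moreover have "u t = u (x + \<delta>) + (t - (x + \<delta>))"
    using rising[OF assms(2) no_tooth_between[OF assms(1) order_refl assms(3)]] .
  ultimately show ?thesis by simp
qed

lemma falling_at_start:
  assumes "x \<in> starts" "0 \<le> s" "s \<le> \<delta>"
  shows "u (x + s) = u x - \<Lambda> * s"
  using assms falling unfolding starts_def by auto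

lemma increment_over_tooth:
  assumes "x \<in> starts"
  shows "u (nxt x) - u x = (nxt x - x) - (\<Lambda> + 1) * min \<delta> (nxt x - x)"
proof (cases "x + \<delta> \<le> nxt x")
  case True
  then show ?thesis using rising_after_tooth[OF assms True order_refl] by (simp add: algebra_simps min_def)
next
  case False
  then show ?thesis
    using falling_at_start[OF assms, of "nxt x - x"] nxt_gt[OF assms] by (simp add: algebra_simps min_def)
qed

lemma sum_min_tooth_length: "(\<Sum>x\<in>starts. min \<delta> (nxt x - x)) = real L * \<delta>"
proof -
  have "(\<Sum>x\<in>starts. u (nxt x) - u x) = 0"
    using sum_next_in_telescope[OF finite_starts starts_subset start_0, of u] periodic[of "a 0"]
    unfolding nxt_def by simp
  moreover have "(\<Sum>x\<in>starts. nxt x - x) = T"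
    using sum_next_in_telescope[OF finite_starts starts_subset start_0, of "\<lambda>x. x"]
    unfolding nxt_def by simp
  ultimately have "(\<Lambda> + 1) * (\<Sum>x\<in>starts. min \<delta> (nxt x - x)) = T"
    using increment_over_tooth by (simp add: sum_subtractf sum_distrib_left)
  then have "(\<Lambda> + 1) * (\<Sum>x\<in>starts. min \<delta> (nxt x - x)) = (\<Lambda> + 1) * (real L * \<delta>)"
    unfolding T_eq by (simp add: algebra_simps)
  then show ?thesis using \<Lambda>_pos by simp
qed

lemma full_tooth_unless_last:
  assumes "x \<in> starts" "x \<noteq> Max starts"
  shows "x + \<delta> \<le> nxt x"
proof -
  have "x < Max starts" using assms finite_starts by (simp add: order_le_neq_trans)
  moreover have "Max starts \<in> starts" using finite_starts start_0 by (intro Max_in) auto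
  ultimately have "nxt x \<le> Max starts" using nxt_least[OF assms(1)] by blast
  then have "nxt x \<in> starts"
    using nxt_cases[OF assms(1)] \<open>Max starts \<in> starts\<close> starts_subset by fastforce
  then show ?thesis using starts_separated[OF assms(1)] nxt_gt[OF assms(1)] by fastforce
qed

text \<open>All teeth but the last have a complete falling part of length \<open>\<delta>\<close>, and the falling
  parts add up to \<open>L\<delta>\<close>; so there are \<open>L\<close> teeth and the last one is complete too.\<close>

lemma card_starts_and_teeth_full: "card starts = L" "x \<in> starts \<Longrightarrow> x + \<delta> \<le> nxt x"
proof -
  define M where "M = Max starts"
  have "M \<in> starts" unfolding M_def using finite_starts start_0 by (intro Max_in) auto
  define r where "r = min \<delta> (nxt M - M)"
  have r: "0 < r" "r \<le> \<delta>" unfolding r_def using nxt_gt[OF \<open>M \<in> starts\<close>] \<delta>_pos by auto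
  have "card starts \<ge> 1" using finite_starts start_0 by (metis One_nat_def Suc_leI card_gt_0_iff empty_iff)
  have "real L * \<delta> = r + (\<Sum>x\<in>starts - {M}. min \<delta> (nxt x - x))"
    unfolding r_def sum_min_tooth_length[symmetric]
    using finite_starts \<open>M \<in> starts\<close> by (simp add: sum.remove)
  also have "(\<Sum>x\<in>starts - {M}. min \<delta> (nxt x - x)) = (\<Sum>x\<in>starts - {M}. \<delta>)"
  proof (rule sum.cong[OF refl])
    show "min \<delta> (nxt x - x) = \<delta>" if "x \<in> starts - {M}" for x
      using full_tooth_unless_last[of x] that unfolding M_def by simp
  qed
  also have "\<dots> = (real (card starts) - 1) * \<delta>"
    using finite_starts \<open>M \<in> starts\<close> \<open>card starts \<ge> 1\<close> by (simp add: of_nat_diff)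
  finally have r_eq: "r = (real L + 1 - real (card starts)) * \<delta>" by (simp add: algebra_simps)
  then have "0 < real L + 1 - real (card starts)" "real L + 1 - real (card starts) \<le> 1"
    using r \<delta>_pos by (auto simp: zero_less_mult_iff mult_le_cancel_right1)
  then show card: "card starts = L" by linarith
  then have "r = \<delta>" using r_eq by simp
  show "x + \<delta> \<le> nxt x" if "x \<in> starts"
  proof (cases "x = M")
    case True
    then show ?thesis using \<open>r = \<delta>\<close> unfolding r_def by (simp add: min_def split: if_splits)
  next
    case False
    then show ?thesis using full_tooth_unless_last[OF that] unfolding M_def by simp
  qed
qed

lemma integral_tooth:
  assumes "x \<in> starts"
  shows "integral {x..nxt x} (\<lambda>t. (u t)\<^sup>2 - (\<Lambda> * \<delta> / 2)\<^sup>2) = tooth_energy \<Lambda> \<delta> (u x) (nxt x - x - \<delta>)"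
proof -
  have "((\<lambda>t. (u t)\<^sup>2 - (\<Lambda> * \<delta> / 2)\<^sup>2) has_integral tooth_energy \<Lambda> \<delta> (u x) (nxt x - x - \<delta>))
      {x..x + \<delta> + (nxt x - x - \<delta>)}"
  proof (rule has_integral_tooth)
    show "u (x + s) = u x - \<Lambda> * s" if "0 \<le> s" "s \<le> \<delta>" for s
      using falling_at_start[OF assms that] .
    show "u (x + \<delta> + s) = u x - \<Lambda> * \<delta> + s" if "0 \<le> s" "s \<le> nxt x - x - \<delta>" for s
      using rising_after_tooth[OF assms, of "x + \<delta> + s"] that by simp
  qed (use \<Lambda>_pos \<delta>_pos card_starts_and_teeth_full(2)[OF assms] in auto)
  then show ?thesis by (simp add: integral_unique)
qed

lemma integral_square_eq_sum_teeth:
  "integral {0..T} (\<lambda>t. (u t)\<^sup>2)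
     = (\<Lambda> * \<delta> / 2)\<^sup>2 * T + (\<Sum>x\<in>starts. tooth_energy \<Lambda> \<delta> (u x) (nxt x - x - \<delta>))"
proof -
  define c where "c = \<Lambda> * \<delta> / 2"
  define f where "f t = (u t)\<^sup>2 - c\<^sup>2" for t
  have int: "g integrable_on {x..y}" if "continuous_on UNIV g" for g :: "real \<Rightarrow> real" and x y
    using that continuous_on_subset integrable_continuous_interval by blast
  have cont_sq: "continuous_on UNIV (\<lambda>t. (u t)\<^sup>2)" using continuous by (intro continuous_intros)
  have "integral {0..T} (\<lambda>t. (u t)\<^sup>2) = integral {a 0..a 0 + T} (\<lambda>t. (u t)\<^sup>2)"
    using integral_periodic_shift[OF _ cont_sq T_pos] periodic by simp
  also have "\<dots> = integral {a 0..a 0 + T} f + c\<^sup>2 * T"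
  proof -
    have "integral {a 0..a 0 + T} f = integral {a 0..a 0 + T} (\<lambda>t. (u t)\<^sup>2) - integral {a 0..a 0 + T} (\<lambda>t. c\<^sup>2)"
      unfolding f_def by (intro integral_diff int cont_sq continuous_on_const)
    then show ?thesis using T_pos by simp
  qed
  also have "integral {a 0..a 0 + T} f = (\<Sum>x\<in>starts. integral {x..nxt x} f)"
  proof -
    have "integral {a 0..nxt x} f - integral {a 0..x} f = integral {x..nxt x} f" if "x \<in> starts" for x
      using Henstock_Kurzweil_Integration.integral_combine[of "a 0" x "nxt x" f]
        int[of f] continuous starts_subset that nxt_gt[OF that]
      unfolding f_def by (force intro: continuous_intros)
    then show ?thesis
      using sum_next_in_telescope[OF finite_starts starts_subset start_0, of "\<lambda>t. integral {a 0..t} f"]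
      unfolding nxt_def by simp
  qed
  also have "\<dots> = (\<Sum>x\<in>starts. tooth_energy \<Lambda> \<delta> (u x) (nxt x - x - \<delta>))"
    using integral_tooth unfolding f_def c_def by simp
  finally show ?thesis unfolding c_def by simp
qed

lemma integral_square_ge: "T * (\<Lambda> * \<delta> / 2)\<^sup>2 / 3 \<le> integral {0..T} (\<lambda>t. (u t)\<^sup>2)"
proof -
  have "(\<Sum>x\<in>starts. - 2/3 * (\<Lambda> * \<delta> / 2)\<^sup>2 * P) \<le> (\<Sum>x\<in>starts. tooth_energy \<Lambda> \<delta> (u x) (nxt x - x - \<delta>))"
    using tooth_energy_ge[OF \<Lambda>_pos \<delta>_pos] card_starts_and_teeth_full(2)
    unfolding P_def by (intro sum_mono) force
  then show ?thesis
    unfolding integral_square_eq_sum_teeth using card_starts_and_teeth_full(1) T_eq_P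
    by (simp add: algebra_simps)
qed

lemma minimal_teeth:
  assumes "integral {0..T} (\<lambda>t. (u t)\<^sup>2) = T * (\<Lambda> * \<delta> / 2)\<^sup>2 / 3" and "x \<in> starts"
  shows "u x = \<Lambda> * \<delta> / 2" and "nxt x = x + P"
proof -
  define m where "m = - 2/3 * (\<Lambda> * \<delta> / 2)\<^sup>2 * ((\<Lambda> + 1) * \<delta>)"
  define E where "E = (\<lambda>x. tooth_energy \<Lambda> \<delta> (u x) (nxt x - x - \<delta>))"
  have E_ge: "m \<le> E x" if "x \<in> starts" for x
    using tooth_energy_ge[OF \<Lambda>_pos \<delta>_pos] card_starts_and_teeth_full(2)[OF that]
    unfolding m_def E_def by simp
  have sum_E: "(\<Sum>x\<in>starts. E x) = - 2/3 * (\<Lambda> * \<delta> / 2)\<^sup>2 * T"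
  proof -
    have "(\<Lambda> * \<delta> / 2)\<^sup>2 * T + (\<Sum>x\<in>starts. E x) = T * (\<Lambda> * \<delta> / 2)\<^sup>2 / 3"
      using assms(1) integral_square_eq_sum_teeth unfolding E_def by simp
    then show ?thesis by (simp add: algebra_simps)
  qed
  have "(\<Sum>x\<in>starts. E x - m) = (\<Sum>x\<in>starts. E x) - real L * m"
    by (simp add: sum_subtractf card_starts_and_teeth_full(1))
  also have "\<dots> = 0" unfolding sum_E m_def by (simp add: T_eq_P P_def)
  finally have "(\<Sum>x\<in>starts. E x - m) = 0" .
  then have "E x = m"
    using sum_nonneg_eq_0_iff[OF finite_starts, of "\<lambda>x. E x - m"] E_ge assms(2) by auto
  then have "u x = \<Lambda> * \<delta> / 2 \<and> nxt x - x - \<delta> = \<Lambda> * \<delta>"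
    using tooth_energy_eq_min_iff[OF \<Lambda>_pos \<delta>_pos] card_starts_and_teeth_full(2)[OF assms(2)]
    unfolding E_def m_def by simp
  then show "u x = \<Lambda> * \<delta> / 2" "nxt x = x + P" unfolding P_def by (simp_all add: algebra_simps)
qed

lemma periodic_starts:
  assumes "integral {0..T} (\<lambda>t. (u t)\<^sup>2) = T * (\<Lambda> * \<delta> / 2)\<^sup>2 / 3" and "i < L"
  shows "a 0 + real i * P \<in> starts"
  using \<open>i < L\<close>
proof (induction i)
  case (Suc i)
  then have x: "a 0 + real i * P \<in> starts" by simp
  have "a 0 + real (Suc i) * P < a 0 + T"
    using Suc.prems P_pos unfolding T_eq_P by (simp add: mult_strict_right_mono)
  then show ?case
    using nxt_cases[OF x] minimal_teeth(2)[OF assms(1) x] by (simp add: algebra_simps)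
qed (use start_0 in simp)

lemma eq_ubar_shift_on_period:
  assumes "integral {0..T} (\<lambda>t. (u t)\<^sup>2) = T * (\<Lambda> * \<delta> / 2)\<^sup>2 / 3" and "a 0 \<le> t" "t < a 0 + T"
  shows "u t = ubar \<Lambda> \<delta> (t - (a 0 + \<delta>)) - \<Lambda> * \<delta> / 2"
proof -
  define i where "i = nat \<lfloor>(t - a 0) / P\<rfloor>"
  have "0 \<le> (t - a 0) / P" using assms(2) P_pos by simp
  then have "real i \<le> (t - a 0) / P" "(t - a 0) / P < real i + 1" unfolding i_def by linarith+
  then have ti: "a 0 + real i * P \<le> t" "t < a 0 + real i * P + P"
    using P_pos by (simp_all add: pos_le_divide_eq pos_divide_less_eq algebra_simps)
  have "(t - a 0) / P < real L" using assms(3) P_pos unfolding T_eq_P by (simp add: pos_divide_less_eq)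
  then have "i < L" using \<open>real i \<le> (t - a 0) / P\<close> by linarith
  define x where "x = a 0 + real i * P"
  have x: "x \<in> starts" unfolding x_def by (rule periodic_starts[OF assms(1) \<open>i < L\<close>])
  have u_x: "u x = \<Lambda> * \<delta> / 2" by (rule minimal_teeth(1)[OF assms(1) x])
  define s where "s = t - x"
  have s: "0 \<le> s" "s < P" using ti unfolding s_def x_def by auto
  have "ubar \<Lambda> \<delta> (t - (a 0 + \<delta>)) = ubar \<Lambda> \<delta> ((s - \<delta>) + of_int (int i) * ((\<Lambda> + 1) * \<delta>))"
    unfolding s_def x_def P_def by (simp add: algebra_simps)
  also have "\<dots> = max (s - \<delta>) (- \<Lambda> * (s - \<delta>))"
    using s unfolding P_def by (subst ubar_on_period[OF \<Lambda>_pos \<delta>_pos]) (auto simp: algebra_simps)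
  finally have ubar_t: "ubar \<Lambda> \<delta> (t - (a 0 + \<delta>)) = max (s - \<delta>) (- \<Lambda> * (s - \<delta>))" .
  show ?thesis
  proof (cases "s \<le> \<delta>")
    case True
    have "0 \<le> - \<Lambda> * (s - \<delta>)" using True \<Lambda>_pos by (simp add: mult_nonneg_nonpos)
    then have "max (s - \<delta>) (- \<Lambda> * (s - \<delta>)) = - \<Lambda> * (s - \<delta>)" using True by (simp add: max_absorb2)
    moreover have "u t = u x - \<Lambda> * s"
      using falling_at_start[OF x s(1) True] unfolding s_def by simp
    ultimately show ?thesis using ubar_t u_x by (simp add: algebra_simps)
  next
    case False
    have "0 \<le> s - \<delta>" "- \<Lambda> * (s - \<delta>) \<le> 0" using False \<Lambda>_pos by (simp_all add: mult_nonneg_nonneg)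
    then have "max (s - \<delta>) (- \<Lambda> * (s - \<delta>)) = s - \<delta>" by (simp add: max_absorb1)
    moreover have "u t = u x - \<Lambda> * \<delta> + (t - (x + \<delta>))"
      using rising_after_tooth[OF x, of t] False s minimal_teeth(2)[OF assms(1) x] unfolding s_def by simp
    ultimately show ?thesis using ubar_t u_x unfolding s_def by (simp add: algebra_simps)
  qed
qed

lemma eq_ubar_shift:
  assumes "integral {0..T} (\<lambda>t. (u t)\<^sup>2) = T * (\<Lambda> * \<delta> / 2)\<^sup>2 / 3"
  shows "u t = ubar \<Lambda> \<delta> (t - (a 0 + \<delta>)) - \<Lambda> * \<delta> / 2"
proof -
  define V where "V t = ubar \<Lambda> \<delta> (t - (a 0 + \<delta>)) - \<Lambda> * \<delta> / 2" for t
  have "V (t + P) = V t" for t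
    using ubar_periodic[OF \<Lambda>_pos \<delta>_pos, of "t - (a 0 + \<delta>)"] unfolding V_def P_def
    by (simp add: algebra_simps)
  then have V_periodic: "V (t + T) = V t" for t
    using periodic_plus_of_int[of V P, of t "int L"] unfolding T_eq_P by simp
  define n where "n = \<lfloor>(t - a 0) / T\<rfloor>"
  have "of_int n \<le> (t - a 0) / T" "(t - a 0) / T < of_int n + 1" unfolding n_def by linarith+
  then have n: "a 0 \<le> t + of_int (- n) * T" "t + of_int (- n) * T < a 0 + T"
    using T_pos by (simp_all add: pos_le_divide_eq pos_divide_less_eq algebra_simps)
  have "u t = u (t + of_int (- n) * T)" using periodic_plus_of_int[of u T, OF periodic, of t "- n"] by simp
  also have "\<dots> = V (t + of_int (- n) * T)" unfolding V_def by (rule eq_ubar_shift_on_period[OF assms n])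
  also have "\<dots> = V t" using periodic_plus_of_int[of V T, OF V_periodic, of t "- n"] by simp
  finally show ?thesis unfolding V_def .
qed

end

section \<open>Minimizers\<close>

lemma admissible_imp_sawtooth:
  assumes "\<Lambda> > 0" "\<delta> > 0" "L \<ge> 1" "T = real L * (\<Lambda> + 1) * \<delta>" "admissible T \<Lambda> \<delta> u"
  obtains a where "sawtooth \<Lambda> \<delta> T L u a"
proof (rule admissible_obtain_teeth[OF assms(2,5)])
  fix a :: "nat \<Rightarrow> real"
  assume "\<And>i j. i \<noteq> j \<Longrightarrow> \<delta> \<le> \<bar>a i - a j\<bar>"
    and "\<And>k s. 0 \<le> s \<Longrightarrow> s \<le> \<delta> \<Longrightarrow> u (a k + s) = u (a k) - \<Lambda> * s"
    and "\<And>x y. x \<le> y \<Longrightarrow> \<forall>k. a k + \<delta> \<le> x \<or> y \<le> a k \<Longrightarrow> u y = u x + (y - x)"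
  moreover have "continuous_on UNIV u" and "\<And>x. u (x + T) = u x"
    using assms(5) by (simp_all add: admissible_def)
  ultimately show thesis by (intro that[of a] sawtooth.intro assms(1-4))
qed

lemma admissible_integral_square_ge:
  assumes "\<Lambda> > 0" "\<delta> > 0" "L \<ge> 1" "T = real L * (\<Lambda> + 1) * \<delta>" "admissible T \<Lambda> \<delta> u"
  shows "T * (\<Lambda> * \<delta> / 2)\<^sup>2 / 3 \<le> integral {0..T} (\<lambda>x. (u x)\<^sup>2)"
proof (rule admissible_imp_sawtooth[OF assms])
  fix a assume "sawtooth \<Lambda> \<delta> T L u a"
  then show ?thesis by (rule sawtooth.integral_square_ge)
qed

lemma admissible_integral_square_eq_imp_ubar_shift:
  assumes "\<Lambda> > 0" "\<delta> > 0" "L \<ge> 1" "T = real L * (\<Lambda> + 1) * \<delta>" "admissible T \<Lambda> \<delta> u"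
    and "integral {0..T} (\<lambda>x. (u x)\<^sup>2) = T * (\<Lambda> * \<delta> / 2)\<^sup>2 / 3"
  shows "\<exists>x0. u = (\<lambda>x. ubar \<Lambda> \<delta> (x - x0) - \<Lambda> * \<delta> / 2)"
proof (rule admissible_imp_sawtooth[OF assms(1-5)])
  fix a assume "sawtooth \<Lambda> \<delta> T L u a"
  then have "u x = ubar \<Lambda> \<delta> (x - (a 0 + \<delta>)) - \<Lambda> * \<delta> / 2" for x
    using assms(6) by (rule sawtooth.eq_ubar_shift)
  then have "u = (\<lambda>x. ubar \<Lambda> \<delta> (x - (a 0 + \<delta>)) - \<Lambda> * \<delta> / 2)" by (rule ext)
  then show ?thesis by (rule exI)
qed

lemma F0_le_iff:
  assumes "T > 0"
  shows "F0 T v \<le> F0 T w \<longleftrightarrow> integral {0..T} (\<lambda>x. (v x)\<^sup>2) \<le> integral {0..T} (\<lambda>x. (w x)\<^sup>2)"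
  using assms unfolding F0_def by (simp add: divide_le_cancel)

theorem theorem1p6:
  fixes \<Lambda> \<delta> T :: real and L :: nat
  assumes "\<Lambda> > 0" and "\<delta> > 0" and "L \<ge> 1"
    and "T = real L * (\<Lambda> + 1) * \<delta>"
  shows "\<forall>u. minimizer T \<Lambda> \<delta> u \<longleftrightarrow>
           (\<exists>x0::real. u = (\<lambda>x. ubar \<Lambda> \<delta> (x - x0) - \<Lambda> * \<delta> / 2))"
proof -
  have "T > 0" using assms by (simp add: zero_less_mult_iff)
  note F0_le = F0_le_iff[OF \<open>T > 0\<close>]
  note integral_ubar = integral_ubar_shift_square[OF assms(1,2,4)]
  note admissible_ubar = admissible_ubar_shift[OF assms(1,2,4)]
  show ?thesis
  proof (intro allI iffI)
    fix u assume "minimizer T \<Lambda> \<delta> u"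
    then have adm: "admissible T \<Lambda> \<delta> u"
      and "F0 T u \<le> F0 T (\<lambda>x. ubar \<Lambda> \<delta> (x - 0) - \<Lambda> * \<delta> / 2)"
      using admissible_ubar unfolding minimizer_def by blast+
    then have "integral {0..T} (\<lambda>x. (u x)\<^sup>2) \<le> T * (\<Lambda> * \<delta> / 2)\<^sup>2 / 3"
      unfolding F0_le integral_ubar by blast
    with admissible_integral_square_ge[OF assms adm]
    have "integral {0..T} (\<lambda>x. (u x)\<^sup>2) = T * (\<Lambda> * \<delta> / 2)\<^sup>2 / 3" by linarith
    then show "\<exists>x0. u = (\<lambda>x. ubar \<Lambda> \<delta> (x - x0) - \<Lambda> * \<delta> / 2)"
      by (rule admissible_integral_square_eq_imp_ubar_shift[OF assms adm])
  next
    fix u assume "\<exists>x0. u = (\<lambda>x. ubar \<Lambda> \<delta> (x - x0) - \<Lambda> * \<delta> / 2)"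
    then obtain x0 where u: "u = (\<lambda>x. ubar \<Lambda> \<delta> (x - x0) - \<Lambda> * \<delta> / 2)" ..
    show "minimizer T \<Lambda> \<delta> u"
      unfolding minimizer_def F0_le u integral_ubar
      using admissible_ubar admissible_integral_square_ge[OF assms] by blast
  qed
qed

end
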